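(* Let $n$ and $k$ be positive integers with $k\ge2$ and $n\ge2k+1$. Then $B_2(n,k,k+1;3)\ge 2^{n-2k+1}$.
   Context: For a prime power $q$, $\mathcal{G}_q(n,k)$ denotes the set of all $k$-dimensional subspaces of $\mathbb{F}_q^n$. An $\alpha$-$(n,k,\delta)_q^c$ covering Grassmannian code is a subset $\mathcal{C}\subseteq\mathcal{G}_q(n,k)$ (no repeated codewords) such that every set of $\alpha$ distinct codewords of $\mathcal{C}$ spans a subspace of $\mathbb{F}_q^n$ of dimension at least $k+\delta$. $B_q(n,k,\delta;\alpha)$ denotes the maximum size of an $\alpha$-$(n,k,\delta)_q^c$ code. *)

theory Defs
  imports Main "HOL.Vector_Spaces" "HOL-Library.Z2" "HOL-Library.Function_Algebras"
begin

text \<open>Vectors of F^n are represented as functions nat => F vanishing outside {0..<n}.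
  Scalar multiplication is pointwise.\<close>

definition fscale :: "'a::field \<Rightarrow> (nat \<Rightarrow> 'a) \<Rightarrow> (nat \<Rightarrow> 'a)" where
  "fscale c v = (\<lambda>i. c * v i)"

definition Fvecs :: "nat \<Rightarrow> (nat \<Rightarrow> 'a::field) set" where
  "Fvecs n = {v. \<forall>i\<ge>n. v i = 0}"

abbreviation fspan :: "(nat \<Rightarrow> 'a::field) set \<Rightarrow> (nat \<Rightarrow> 'a) set" where
  "fspan S \<equiv> module.span fscale S"

abbreviation fdim :: "(nat \<Rightarrow> 'a::field) set \<Rightarrow> nat" where
  "fdim S \<equiv> vector_space.dim fscale S"

definition Grassmannian :: "'a::field itself \<Rightarrow> nat \<Rightarrow> nat \<Rightarrow> (nat \<Rightarrow> 'a) set set" where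
  "Grassmannian _ n k = {V. V \<subseteq> Fvecs n \<and> module.subspace fscale V \<and> fdim V = k}"

definition covering_code :: "nat \<Rightarrow> nat \<Rightarrow> nat \<Rightarrow> nat \<Rightarrow> (nat \<Rightarrow> 'a::field) set set \<Rightarrow> bool" where
  "covering_code alpha n k delta C \<longleftrightarrow>
     C \<subseteq> Grassmannian TYPE('a) n k \<and>
     (\<forall>A. A \<subseteq> C \<and> card A = alpha \<longrightarrow> fdim (fspan (\<Union>A)) \<ge> k + delta)"

definition B_code :: "'a::field itself \<Rightarrow> nat \<Rightarrow> nat \<Rightarrow> nat \<Rightarrow> nat \<Rightarrow> nat" where
  "B_code _ n k delta alpha =
     Max {card C | C :: (nat \<Rightarrow> 'a) set set. covering_code alpha n k delta C}"

abbreviation B2 :: "nat \<Rightarrow> nat \<Rightarrow> nat \<Rightarrow> nat \<Rightarrow> nat" where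
  "B2 n k delta alpha \<equiv> B_code TYPE(bit) n k delta alpha"

end

theory Submission
  imports Defs
begin

text \<open>For \<open>X \<subseteq> {0..<n - 2k + 1}\<close> let \<open>codeword k X\<close> be the row space over GF(2) of the
  \<open>k \<times> n\<close> matrix whose row \<open>i\<close> is the unit vector \<open>e\<^sub>i\<close> plus the indicator of \<open>X\<close> shifted
  by \<open>k + i\<close>. The identity block makes \<open>X\<close> recoverable from its codeword, so there are
  \<open>2 ^ (n - 2k + 1)\<close> codewords, each of dimension \<open>k\<close>. For distinct \<open>X\<close>, \<open>Y\<close>, \<open>Z\<close> the sum of
  the \<open>i\<close>-th rows of two codewords is the indicator of their symmetric difference shifted by
  \<open>k + i\<close>. The \<open>k\<close> rows for \<open>X\<close>, the \<open>k\<close> sums for \<open>X, Y\<close> and one sum for \<open>X, Z\<close> or \<open>Y, Z\<close>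
  (chosen so that its leading position is new) are \<open>2k + 1\<close> vectors in the span of the three
  codewords with pairwise distinct leading positions, hence linearly independent.\<close>

interpretation fs: vector_space "fscale :: 'a::field \<Rightarrow> (nat \<Rightarrow> 'a) \<Rightarrow> nat \<Rightarrow> 'a"
  by unfold_locales (auto simp: fscale_def fun_eq_iff algebra_simps)

lemma fscale_apply [simp]: "fscale c v t = c * v t"
  by (simp add: fscale_def)

lemma sum_apply: "(\<Sum>i\<in>I. f i) x = (\<Sum>i\<in>I. f i x)"
  for f :: "'i \<Rightarrow> 'b \<Rightarrow> 'c::comm_monoid_add"
  by (induction I rule: infinite_finite_induct) auto

lemma sum_fscale_apply: "(\<Sum>i\<in>I. fscale (c i) (g i)) t = (\<Sum>i\<in>I. c i * g i t)"
  by (simp add: sum_apply)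

lemma finite_Fvecs: "finite (Fvecs n :: (nat \<Rightarrow> 'a::{field,finite}) set)"
proof (rule finite_subset)
  show "Fvecs n \<subseteq> {f :: nat \<Rightarrow> 'a. \<forall>x. (x \<in> {..<n} \<longrightarrow> f x \<in> UNIV) \<and> (x \<notin> {..<n} \<longrightarrow> f x = 0)}"
    by (auto simp: Fvecs_def)
qed (rule finite_set_of_finite_funs; simp)

lemma subspace_Fvecs: "fs.subspace (Fvecs n)"
  by (auto simp: fs.subspace_def Fvecs_def fscale_def)

lemma independent_card_le_fdim:
  assumes "finite W" "fs.independent B" "B \<subseteq> fs.span S" "S \<subseteq> fs.span W"
  shows "card B \<le> fdim S"
proof -
  obtain A where A: "A \<subseteq> S" "fs.independent A" "S \<subseteq> fs.span A" "card A = fdim S"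
    by (rule fs.basis_exists)
  have "finite A"
    using fs.independent_span_bound[OF assms(1) A(2)] A(1) assms(4) by blast
  moreover have "B \<subseteq> fs.span A"
    using assms(3) A(3) by (metis fs.span_mono fs.span_span order_trans)
  ultimately have "card B \<le> card A"
    using fs.independent_span_bound[OF _ assms(2)] by blast
  then show ?thesis
    using A(4) by linarith
qed

definition lead :: "(nat \<Rightarrow> 'a::zero) \<Rightarrow> nat" where
  "lead v = (LEAST t. v t \<noteq> 0)"

lemma lead_eqI: "v b \<noteq> 0 \<Longrightarrow> (\<And>t. t < b \<Longrightarrow> v t = 0) \<Longrightarrow> lead v = b"
  unfolding lead_def by (rule Least_equality) (auto simp: not_less[symmetric])

lemma lead_nonzero: "v \<noteq> 0 \<Longrightarrow> v (lead v) \<noteq> 0"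
  unfolding lead_def by (rule LeastI_ex) (auto simp: fun_eq_iff)

lemma below_lead: "t < lead v \<Longrightarrow> v t = 0"
  unfolding lead_def using not_less_Least by blast

lemma independent_if_leads_distinct:
  fixes B :: "(nat \<Rightarrow> 'a::field) set"
  assumes fin: "finite B" and nz: "0 \<notin> B" and inj: "inj_on lead B"
  shows "fs.independent B"
proof (rule fs.independent_if_scalars_zero[OF fin])
  fix f x assume sum0: "(\<Sum>y\<in>B. fscale (f y) y) = 0" and "x \<in> B"
  show "f x = 0"
  proof (rule ccontr)
    assume "f x \<noteq> 0"
    with \<open>x \<in> B\<close> obtain w where w: "w \<in> B" "f w \<noteq> 0"
      and w_min: "\<And>y. y \<in> B \<Longrightarrow> f y \<noteq> 0 \<Longrightarrow> lead w \<le> lead y"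
      using ex_has_least_nat[of "\<lambda>y. y \<in> B \<and> f y \<noteq> 0" x lead] by blast
    have "(\<Sum>y\<in>B - {w}. f y * y (lead w)) = 0"
    proof (rule sum.neutral, rule ballI)
      fix y assume "y \<in> B - {w}"
      show "f y * y (lead w) = 0"
      proof (cases "f y = 0")
        case False
        then have "lead w < lead y"
          using w_min[of y] inj w(1) \<open>y \<in> B - {w}\<close> by (auto simp: inj_on_def order_le_less)
        then show ?thesis by (simp add: below_lead)
      qed simp
    qed
    then have "(\<Sum>y\<in>B. f y * y (lead w)) = f w * w (lead w)"
      using sum.remove[OF fin w(1), of "\<lambda>y. f y * y (lead w)"] by simp
    moreover have "f w * w (lead w) \<noteq> 0"
      using w nz lead_nonzero[of w] by auto
    ultimately show False
      using sum0 sum_fscale_apply[of f "\<lambda>y. y" B "lead w"] by simp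
  qed
qed

lemma independent_image_if_leads_distinct:
  fixes G :: "'i \<Rightarrow> nat \<Rightarrow> 'a::field"
  assumes "finite I" "\<And>i. i \<in> I \<Longrightarrow> G i \<noteq> 0" "inj_on (lead \<circ> G) I"
  shows "fs.independent (G ` I)" and "card (G ` I) = card I"
proof -
  show "fs.independent (G ` I)"
    using assms by (intro independent_if_leads_distinct) (auto intro: inj_on_imageI)
  show "card (G ` I) = card I"
    using assms(3) by (rule card_image[OF inj_on_imageI2])
qed

lemma sum_fscale_unit:
  fixes g :: "nat \<Rightarrow> nat \<Rightarrow> 'a::field"
  assumes "j < k"
  shows "(\<Sum>i<k. fscale (if j = i then 1 else 0) (g i)) = g j"
proof -
  have "(\<Sum>i<k. fscale (if j = i then 1 else 0) (g i)) = (\<Sum>i<k. if j = i then g i else 0)"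
    by (rule sum.cong) simp_all
  also have "\<dots> = g j"
    using assms by simp
  finally show ?thesis .
qed

lemma span_systematic:
  fixes g :: "nat \<Rightarrow> nat \<Rightarrow> 'a::field"
  assumes "v \<in> fs.span (g ` {..<k})"
    and unit: "\<And>i j. i < k \<Longrightarrow> j < k \<Longrightarrow> g i j = (if i = j then 1 else 0)"
  shows "v = (\<Sum>i<k. fscale (v i) (g i))"
  using assms(1)
proof (induction rule: fs.span_induct)
  case base
  show ?case
    unfolding fs.subspace_def Ball_def mem_Collect_eq
  proof (intro conjI ballI allI impI)
    show "0 = (\<Sum>i<k. fscale (0 i) (g i))"
      by simp
  next
    fix x y :: "nat \<Rightarrow> 'a"
    assume "x = (\<Sum>i<k. fscale (x i) (g i))" "y = (\<Sum>i<k. fscale (y i) (g i))"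
    then have "x + y = (\<Sum>i<k. fscale (x i) (g i)) + (\<Sum>i<k. fscale (y i) (g i))"
      by (rule arg_cong2)
    also have "\<dots> = (\<Sum>i<k. fscale ((x + y) i) (g i))"
      by (simp add: fs.scale_left_distrib sum.distrib)
    finally show "x + y = (\<Sum>i<k. fscale ((x + y) i) (g i))" .
  next
    fix c and x :: "nat \<Rightarrow> 'a"
    assume "x = (\<Sum>i<k. fscale (x i) (g i))"
    then have "fscale c x = fscale c (\<Sum>i<k. fscale (x i) (g i))"
      by (rule arg_cong)
    also have "\<dots> = (\<Sum>i<k. fscale (fscale c x i) (g i))"
      by (simp add: fs.scale_sum_right fs.scale_scale)
    finally show "fscale c x = (\<Sum>i<k. fscale (fscale c x i) (g i))" .
  qed
next
  case (step x)
  then obtain j where j: "j < k" "x = g j" by auto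
  have "(\<Sum>i<k. fscale (g j i) (g i)) = (\<Sum>i<k. fscale (if j = i then 1 else 0) (g i))"
    by (rule sum.cong) (simp_all add: unit j(1))
  also have "\<dots> = g j"
    by (rule sum_fscale_unit[OF j(1)])
  finally show ?case
    unfolding j(2) by (rule sym)
qed

definition shifted_indicator :: "nat \<Rightarrow> nat set \<Rightarrow> nat \<Rightarrow> 'a::zero_neq_one" where
  "shifted_indicator d W = (\<lambda>t. if d \<le> t \<and> t - d \<in> W then 1 else 0)"

definition gen_row :: "nat \<Rightarrow> nat set \<Rightarrow> nat \<Rightarrow> nat \<Rightarrow> bit" where
  "gen_row k X i = (\<lambda>t. if t = i \<or> (k + i \<le> t \<and> t - (k + i) \<in> X) then 1 else 0)"

definition codeword :: "nat \<Rightarrow> nat set \<Rightarrow> (nat \<Rightarrow> bit) set" where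
  "codeword k X = fs.span (gen_row k X ` {..<k})"

lemma lead_shifted_indicator:
  "finite W \<Longrightarrow> W \<noteq> {} \<Longrightarrow> lead (shifted_indicator d W) = d + Min W"
  by (rule lead_eqI) (auto simp: shifted_indicator_def dest: Min_le[of W "_ - d"])

lemma shifted_indicator_nonzero: "w \<in> W \<Longrightarrow> shifted_indicator d W \<noteq> 0"
  by (auto simp: shifted_indicator_def fun_eq_iff intro!: exI[of _ "d + w"])

lemma lead_gen_row: "i < k \<Longrightarrow> lead (gen_row k X i) = i"
  by (rule lead_eqI) (auto simp: gen_row_def)

lemma gen_row_nonzero: "gen_row k X i \<noteq> 0"
  by (auto simp: gen_row_def fun_eq_iff)

lemma gen_row_systematic: "j < k \<Longrightarrow> gen_row k X i j = (if i = j then 1 else 0)"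
  by (auto simp: gen_row_def)

lemma gen_row_add:
  "i < k \<Longrightarrow> gen_row k P i + gen_row k Q i = shifted_indicator (k + i) (sym_diff P Q)"
  by (auto simp: gen_row_def shifted_indicator_def fun_eq_iff)

lemma fdim_codeword: "fdim (codeword k X) = k"
proof -
  have leads: "inj_on (lead \<circ> gen_row k X) {..<k}"
    by (auto simp: inj_on_def lead_gen_row)
  have "fs.independent (gen_row k X ` {..<k})"
    by (rule independent_image_if_leads_distinct(1)) (simp_all add: gen_row_nonzero leads)
  moreover have "card (gen_row k X ` {..<k}) = card {..<k}"
    by (rule independent_image_if_leads_distinct(2)) (simp_all add: gen_row_nonzero leads)
  ultimately show ?thesis
    unfolding codeword_def fs.dim_span by (simp add: fs.dim_eq_card_independent)
qed

lemma codeword_subset_Fvecs: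
  assumes "X \<subseteq> {..<m}" "2 * k + m \<le> n + 1"
  shows "codeword k X \<subseteq> Fvecs n"
  unfolding codeword_def
proof (rule fs.span_minimal[OF _ subspace_Fvecs])
  show "gen_row k X ` {..<k} \<subseteq> Fvecs n"
    using assms by (fastforce simp: Fvecs_def gen_row_def)
qed

lemma codeword_inj:
  assumes "0 < k" "codeword k X = codeword k Y"
  shows "X = Y"
proof -
  have "gen_row k X 0 \<in> codeword k X"
    unfolding codeword_def using assms(1) by (intro fs.span_base) simp
  then have "gen_row k X 0 \<in> fs.span (gen_row k Y ` {..<k})"
    using assms(2) by (simp add: codeword_def)
  then have "gen_row k X 0 = (\<Sum>i<k. fscale (gen_row k X 0 i) (gen_row k Y i))"
    by (rule span_systematic) (simp_all add: gen_row_systematic)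
  also have "\<dots> = (\<Sum>i<k. fscale (if 0 = i then 1 else 0) (gen_row k Y i))"
    by (rule sum.cong) (simp_all add: gen_row_systematic)
  also have "\<dots> = gen_row k Y 0"
    using assms(1) by (rule sum_fscale_unit)
  finally have row_eq: "gen_row k X 0 (k + s) = gen_row k Y 0 (k + s)" for s
    by simp
  have "s \<in> X \<longleftrightarrow> s \<in> Y" for s
    using row_eq[of s] assms(1) by (auto simp: gen_row_def split: if_splits)
  then show ?thesis
    by blast
qed

text \<open>No element lies in all three symmetric differences, as the third is the symmetric
  difference of the other two.\<close>

lemma Min_sym_diff_ne:
  fixes X Y Z :: "'a::linorder set"
  assumes "finite X" "finite Y" "finite Z" "X \<noteq> Y" "Y \<noteq> Z" "X \<noteq> Z"
  shows "Min (sym_diff X Z) \<noteq> Min (sym_diff X Y) \<or> Min (sym_diff Y Z) \<noteq> Min (sym_diff X Y)"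
proof (rule ccontr)
  assume "\<not> ?thesis"
  moreover have "Min (sym_diff P Q) \<in> sym_diff P Q" if "P \<in> {X, Y, Z}" "Q \<in> {X, Y, Z}" "P \<noteq> Q" for P Q
    using that assms by (intro Min_in) auto
  ultimately have "Min (sym_diff X Y) \<in> sym_diff X Y \<inter> sym_diff X Z \<inter> sym_diff Y Z"
    using assms by (metis IntI insertCI)
  then show False
    by blast
qed

lemma fdim_union_codewords:
  assumes k: "0 < k" and fin: "finite X" "finite Y" "finite Z"
    and distinct: "X \<noteq> Y" "Y \<noteq> Z" "X \<noteq> Z"
  shows "2 * k + 1 \<le> fdim (codeword k X \<union> codeword k Y \<union> codeword k Z)"
proof -
  define S where "S = codeword k X \<union> codeword k Y \<union> codeword k Z"
  have row_in_span: "gen_row k P i \<in> fs.span S" if "P \<in> {X, Y, Z}" "i < k" for P i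
    using that unfolding S_def codeword_def by (auto intro: fs.span_base)
  have shift_in_span: "shifted_indicator (k + i) (sym_diff P Q) \<in> fs.span S"
    if "P \<in> {X, Y, Z}" "Q \<in> {X, Y, Z}" "i < k" for P Q i
    using fs.span_add[OF row_in_span[OF that(1,3)] row_in_span[OF that(2,3)]] gen_row_add[OF that(3)]
    by simp
  define \<mu> where "\<mu> = Min (sym_diff X Y)"
  obtain W where W: "W \<in> {sym_diff X Z, sym_diff Y Z}" "Min W \<noteq> \<mu>"
    using Min_sym_diff_ne[OF fin distinct] unfolding \<mu>_def by blast
  have W_fin: "finite W" "W \<noteq> {}"
    using W(1) fin distinct by auto
  obtain j where j: "j < k" "k + j + Min W \<notin> {k + \<mu>..<k + \<mu> + k}"
  proof (cases "Min W < \<mu>")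
    case True
    then show ?thesis
      using k by (intro that[of 0]) auto
  next
    case False
    then show ?thesis
      using k W(2) by (intro that[of "k - 1"]) auto
  qed
  define G :: "nat \<Rightarrow> nat \<Rightarrow> bit" where
    "G r = (if r < k then gen_row k X r
            else if r < 2 * k then shifted_indicator r (sym_diff X Y)
            else shifted_indicator (k + j) W)" for r
  have XY: "finite (sym_diff X Y)" "sym_diff X Y \<noteq> {}"
    using fin distinct(1) by auto
  then have "\<mu> \<in> sym_diff X Y"
    unfolding \<mu>_def by (rule Min_in)
  have lead_G: "lead (G r) = (if r < k then r else if r < 2 * k then r + \<mu> else k + j + Min W)" for r
    unfolding G_def \<mu>_def using W_fin XY by (simp add: lead_gen_row lead_shifted_indicator)
  have leads: "inj_on (lead \<circ> G) {..<2 * k + 1}"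
    using j by (auto simp: inj_on_def lead_G split: if_splits)
  have nonzero: "G r \<noteq> 0" for r
    unfolding G_def using gen_row_nonzero shifted_indicator_nonzero
    by (metis W_fin(2) \<open>\<mu> \<in> sym_diff X Y\<close> ex_in_conv)
  have G_in_span: "G ` {..<2 * k + 1} \<subseteq> fs.span S"
  proof clarify
    fix r assume "r < 2 * k + 1"
    then show "G r \<in> fs.span S"
      using row_in_span shift_in_span[of X Y "r - k"] shift_in_span[of _ _ j] W(1) j(1)
      unfolding G_def by auto
  qed
  have "S \<subseteq> fs.span (\<Union>P\<in>{X, Y, Z}. gen_row k P ` {..<k})"
    unfolding S_def codeword_def by (intro Un_least fs.span_mono) auto
  then have "card (G ` {..<2 * k + 1}) \<le> fdim S"
    using independent_image_if_leads_distinct(1)[OF _ nonzero leads] G_in_span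
    by (intro independent_card_le_fdim) auto
  moreover have "card (G ` {..<2 * k + 1}) = 2 * k + 1"
    using independent_image_if_leads_distinct(2)[OF _ nonzero leads] by simp
  ultimately show ?thesis
    by (simp add: S_def)
qed

instance bit :: finite
proof
  have "(UNIV :: bit set) = {0, 1}"
    using bit.exhaust by auto
  then show "finite (UNIV :: bit set)"
    by (metis finite.emptyI finite_insert)
qed

lemma card_le_B_code:
  fixes C :: "(nat \<Rightarrow> 'a::{field,finite}) set set"
  assumes "covering_code \<alpha> n k \<delta> C"
  shows "card C \<le> B_code TYPE('a) n k \<delta> \<alpha>"
proof -
  let ?sizes = "{card D | D :: (nat \<Rightarrow> 'a) set set. covering_code \<alpha> n k \<delta> D}"
  have "?sizes \<subseteq> {..card (Pow (Fvecs n :: (nat \<Rightarrow> 'a) set))}"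
  proof clarify
    fix D :: "(nat \<Rightarrow> 'a) set set"
    assume "covering_code \<alpha> n k \<delta> D"
    then have "D \<subseteq> Pow (Fvecs n)"
      by (auto simp: covering_code_def Grassmannian_def)
    then show "card D \<le> card (Pow (Fvecs n :: (nat \<Rightarrow> 'a) set))"
      by (simp add: card_mono finite_Fvecs)
  qed
  then have "finite ?sizes"
    by (rule finite_subset) simp
  then show ?thesis
    unfolding B_code_def using assms by (intro Max_ge) auto
qed

lemma covering_code_codewords:
  assumes k: "0 < k" and length: "2 * k + m \<le> n + 1"
  shows "covering_code 3 n k (k + 1) (codeword k ` Pow {..<m})"
  unfolding covering_code_def
proof (intro conjI allI impI)
  show "codeword k ` Pow {..<m} \<subseteq> Grassmannian TYPE(bit) n k"
  proof clarify
    fix X assume "X \<subseteq> {..<m}"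
    then show "codeword k X \<in> Grassmannian TYPE(bit) n k"
      using codeword_subset_Fvecs[OF _ length] fdim_codeword
      by (simp add: Grassmannian_def codeword_def fs.subspace_span)
  qed
next
  fix A assume A: "A \<subseteq> codeword k ` Pow {..<m} \<and> card A = 3"
  then obtain U V W where A_eq: "A = {U, V, W}" and "U \<noteq> V" "V \<noteq> W" "U \<noteq> W"
    by (auto simp: card_3_iff)
  moreover have "U \<in> codeword k ` Pow {..<m}" "V \<in> codeword k ` Pow {..<m}"
    "W \<in> codeword k ` Pow {..<m}"
    using A unfolding A_eq by auto
  ultimately obtain X Y Z where XYZ: "X \<subseteq> {..<m}" "Y \<subseteq> {..<m}" "Z \<subseteq> {..<m}"
    and "X \<noteq> Y" "Y \<noteq> Z" "X \<noteq> Z"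
    and "\<Union>A = codeword k X \<union> codeword k Y \<union> codeword k Z"
    by (auto simp: A_eq)
  moreover have "finite X" "finite Y" "finite Z"
    using XYZ by (auto intro: finite_subset)
  ultimately show "k + (k + 1) \<le> fdim (fspan (\<Union>A))"
    using fdim_union_codewords[OF k, of X Y Z] by (simp add: fs.dim_span mult_2)
qed

theorem mainTheorem8:
  fixes n k :: nat
  assumes "0 < n" and "2 \<le> k" and "2 * k + 1 \<le> n"
  shows "B2 n k (k + 1) 3 \<ge> 2 ^ (n - 2 * k + 1)"
proof -
  define m where "m = n - 2 * k + 1"
  have k: "0 < k" and length: "2 * k + m \<le> n + 1"
    using assms by (auto simp: m_def)
  have "inj_on (codeword k) (Pow {..<m})"
    using codeword_inj[OF k] by (auto simp: inj_on_def)
  then have "card (codeword k ` Pow {..<m}) = 2 ^ m"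
    by (simp add: card_image card_Pow)
  moreover have "card (codeword k ` Pow {..<m}) \<le> B2 n k (k + 1) 3"
    by (rule card_le_B_code[OF covering_code_codewords[OF k length]])
  ultimately show ?thesis
    by (simp add: m_def)
qed

end
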